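(* Any routing labeling scheme for rooted trees on $n$ nodes needs labels of length $\log n+\Omega(\log\log n)$ bits. This holds even when restricted to the family of rooted trees on $n$ nodes in which every node has at most $2$ children. Precisely: there is a constant $c>0$ such that for all sufficiently large $n$, every routing labeling scheme for that family assigns, to some node of some tree in the family, a label of length at least $\log n+c\log\log n$.
   Context: All logarithms are base $2$. A (designer-port) routing labeling scheme for a family $\mathcal{T}$ of rooted trees consists of an encoder and a decoder. - The encoder is given $T\in\mathcal{T}$. It assigns a binary string (label) $\ell(u)$ to every node $u$. It also labels the edges from each node $u$ to its $\deg(u)$ children with distinct port numbers from $\{1,\dots,\deg(u)\}$; the encoder is free to choose these port numbers. - The decoder receives only $\ell(u)$ and $\ell(w)$ for nodes $u\neq w$ of some $T\in\mathcal{T}$; the value $\lceil\log n\rceil$, where $n=|T|$, may also be assumed known. It must return $0$ if the next node on the path from $u$ to $w$ is the parent of $u$. Otherwise it must return the port number of the first edge on that path. - The length of the scheme is the maximum label length over all trees in $\mathcal{T}$ and all their nodes. *)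

theory Defs
  imports Complex_Main
begin

text \<open>A rooted tree on n nodes is represented with node set {0..<n}, root 0, and a
parent function p (with p 0 = 0 by convention). Every node reaches the root by
iterating p, which forces acyclicity.\<close>

definition is_rooted_tree :: "nat \<Rightarrow> (nat \<Rightarrow> nat) \<Rightarrow> bool" where
  "is_rooted_tree n p \<longleftrightarrow> n \<ge> 1 \<and> p 0 = 0 \<and> (\<forall>v<n. p v < n) \<and>
     (\<forall>v<n. \<exists>k. (p ^^ k) v = 0)"

definition children :: "nat \<Rightarrow> (nat \<Rightarrow> nat) \<Rightarrow> nat \<Rightarrow> nat set" where
  "children n p u = {v. 0 < v \<and> v < n \<and> p v = u}"

definition is_anc :: "(nat \<Rightarrow> nat) \<Rightarrow> nat \<Rightarrow> nat \<Rightarrow> bool" where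
  "is_anc p u w \<longleftrightarrow> (\<exists>k. (p ^^ k) w = u)"

definition binary_tree :: "nat \<Rightarrow> (nat \<Rightarrow> nat) \<Rightarrow> bool" where
  "binary_tree n p \<longleftrightarrow> is_rooted_tree n p \<and> (\<forall>u<n. card (children n p u) \<le> 2)"

text \<open>Port assignment: port v is the port number of the edge from p v to its child v;
at each node u the ports of its children are a bijection onto {1..deg u}.\<close>
definition valid_ports :: "nat \<Rightarrow> (nat \<Rightarrow> nat) \<Rightarrow> (nat \<Rightarrow> nat) \<Rightarrow> bool" where
  "valid_ports n p port \<longleftrightarrow>
     (\<forall>u<n. bij_betw port (children n p u) {1..card (children n p u)})"

definition routes_correctly ::
  "nat \<Rightarrow> (nat \<Rightarrow> nat) \<Rightarrow> (bool list \<Rightarrow> bool list \<Rightarrow> nat) \<Rightarrow> (nat \<Rightarrow> bool list) \<Rightarrow> (nat \<Rightarrow> nat) \<Rightarrow> bool" where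
  "routes_correctly n p dec lab port \<longleftrightarrow>
     (\<forall>u<n. \<forall>w<n. u \<noteq> w \<longrightarrow>
        ((\<not> is_anc p u w \<longrightarrow> dec (lab u) (lab w) = 0) \<and>
         (\<forall>v \<in> children n p u. is_anc p v w \<longrightarrow> dec (lab u) (lab w) = port v)))"

end

theory Submission
  imports Defs
begin

text \<open>For j < (log n)/2 consider the binary tree on n nodes consisting of a spine with legs,
i.e. hanging paths, of length 4^j. In a correct scheme the decoder answers nonzero from an
ancestor to a descendant and zero otherwise, so the labels of one leg form a chain for the relation
"dec a b \<noteq> 0", while the labels of different legs of the same tree are distinct and pairwise
unrelated. Consequently a leg of length 4^j shares at most 4^j' labels with the whole tree of
level j' < j, so at least two thirds of its labels do not occur at lower levels. Summing over the
(log n)/2 levels gives \<Omega>(n log n) distinct labels, whereas there are fewer than 2^(L+1) bit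
strings of length below L. Hence L \<ge> log n + log log n - O(1), which rules out c = 1/2 for
large n.\<close>

section \<open>Routing in rooted trees\<close>

lemma is_anc_child:
  assumes tree: "is_rooted_tree n p" and "w < n" and "(p ^^ m) w = u" and "u \<noteq> w"
  shows "\<exists>v\<in>children n p u. is_anc p v w"
  using assms(3)
proof (induction m)
  case 0 with \<open>u \<noteq> w\<close> show ?case by simp
next
  case (Suc m)
  define v where "v = (p ^^ m) w"
  have "p v = u" using Suc.prems by (simp add: v_def)
  show ?case
  proof (cases "v = 0")
    case True
    then have "(p ^^ m) w = u" using \<open>p v = u\<close> tree by (simp add: v_def is_rooted_tree_def)
    then show ?thesis by (rule Suc.IH)
  next
    case False
    have "v < n" unfolding v_def using tree \<open>w < n\<close>
      by (induction m) (auto simp: is_rooted_tree_def)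
    with False \<open>p v = u\<close> have "v \<in> children n p u" by (simp add: children_def)
    moreover have "is_anc p v w" unfolding is_anc_def v_def by blast
    ultimately show ?thesis by blast
  qed
qed

lemma routes_correctly_to_descendant:
  assumes "is_rooted_tree n p" "valid_ports n p port" "routes_correctly n p dec lab port"
    and "u < n" "w < n" "u \<noteq> w" "is_anc p u w"
  shows "dec (lab u) (lab w) \<noteq> 0"
proof -
  obtain v where v: "v \<in> children n p u" "is_anc p v w"
    using is_anc_child assms(1,5,6,7) unfolding is_anc_def by metis
  then have "dec (lab u) (lab w) = port v"
    using assms(3-6) by (simp add: routes_correctly_def)
  moreover have "port v \<in> {1..card (children n p u)}"
    using assms(2,4) v(1) unfolding valid_ports_def by (metis bij_betw_apply)
  ultimately show ?thesis by simp
qed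

section \<open>Caterpillars\<close>

text \<open>The spine of \<open>caterpillar\<close> k is 0, k, 2k, \<dots>; spine node i*k has as children the next
spine node and the first node of \<open>leg\<close> k i, the path i*k + 1, \<dots>, i*k + k - 1.\<close>

definition caterpillar :: "nat \<Rightarrow> nat \<Rightarrow> nat" where
  "caterpillar k v = (if v mod k = 0 then v - k else v - 1)"

definition leg :: "nat \<Rightarrow> nat \<Rightarrow> nat set" where
  "leg k i = {i * k <..< i * k + k}"

lemma caterpillar_le: "caterpillar k v \<le> v"
  by (simp add: caterpillar_def)

lemma caterpillar_less: "0 < k \<Longrightarrow> 0 < v \<Longrightarrow> caterpillar k v < v"
  by (simp add: caterpillar_def)

lemma caterpillar_reaches_root:
  assumes "0 < k" shows "\<exists>m. (caterpillar k ^^ m) v = 0"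
proof (induction v rule: less_induct)
  case (less v)
  show ?case
  proof (cases "v = 0")
    case True then show ?thesis by (metis funpow_0)
  next
    case False
    then obtain m where "(caterpillar k ^^ m) (caterpillar k v) = 0"
      using less caterpillar_less[OF assms] by blast
    then have "(caterpillar k ^^ Suc m) v = 0" by (simp only: funpow_Suc_right o_apply)
    then show ?thesis by blast
  qed
qed

lemma children_caterpillar: "children n (caterpillar k) u \<subseteq> {u + 1, u + k}"
proof
  fix v assume "v \<in> children n (caterpillar k) u"
  then have "0 < v" "caterpillar k v = u" by (auto simp: children_def)
  moreover have "k \<le> v" if "v mod k = 0" using that \<open>0 < v\<close> by (auto elim!: dvdE)
  ultimately show "v \<in> {u + 1, u + k}" by (auto simp: caterpillar_def split: if_splits)
qed

lemma binary_tree_caterpillar: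
  assumes k: "0 < k" and n: "1 \<le> n" shows "binary_tree n (caterpillar k)"
  unfolding binary_tree_def
proof
  show "is_rooted_tree n (caterpillar k)"
    unfolding is_rooted_tree_def using n caterpillar_reaches_root[OF k] caterpillar_le
    by (auto simp: caterpillar_def intro: le_less_trans)
  have "card (children n (caterpillar k) u) \<le> card {u + 1, u + k}" for u
    by (rule card_mono) (simp, rule children_caterpillar)
  also have "card {u + 1, u + k} \<le> 2" for u :: nat by (simp add: card_insert_if)
  finally show "\<forall>u<n. card (children n (caterpillar k) u) \<le> 2" by simp
qed

lemma mem_leg_iff:
  assumes "0 < k" shows "v \<in> leg k i \<longleftrightarrow> v div k = i \<and> v mod k \<noteq> 0"
proof
  assume "v \<in> leg k i"
  then have "k * i \<le> v" "v < k * Suc i" "v \<noteq> i * k" by (auto simp: leg_def mult.commute)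
  then show "v div k = i \<and> v mod k \<noteq> 0" by (metis div_nat_eqI div_mult_mod_eq add.right_neutral mult.commute)
next
  assume "v div k = i \<and> v mod k \<noteq> 0"
  then have "v = i * k + v mod k" "0 < v mod k" by auto
  moreover have "v mod k < k" using assms by simp
  ultimately show "v \<in> leg k i" unfolding leg_def greaterThanLessThan_iff by linarith
qed

lemma leg_less: "u \<in> leg k i \<Longrightarrow> (i + 1) * k \<le> n \<Longrightarrow> u < n"
  by (auto simp: leg_def)

lemma funpow_caterpillar_leg:
  assumes "t < k" "d \<le> t" shows "(caterpillar k ^^ d) (i * k + t) = i * k + t - d"
  using assms(2)
proof (induction d)
  case (Suc d)
  then have "(i * k + t - d) mod k = t - d" using assms(1)
    by (metis Nat.add_diff_assoc Suc_leD mod_mult_self3 mod_less less_imp_diff_less)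
  with Suc show ?case by (simp add: caterpillar_def)
qed simp

lemma is_anc_caterpillar_leg:
  assumes "t < k" "d \<le> t" shows "is_anc (caterpillar k) (i * k + t - d) (i * k + t)"
  using funpow_caterpillar_leg[OF assms] unfolding is_anc_def by blast

text \<open>The possible ancestors of w: the nodes of its leg above it, and the spine nodes up to its leg.\<close>

lemma caterpillar_preserves_ancestor_region:
  assumes "0 < k"
    and "(v div k = w div k \<and> v mod k \<le> w mod k) \<or> (v mod k = 0 \<and> v div k \<le> w div k)"
  shows "(caterpillar k v div k = w div k \<and> caterpillar k v mod k \<le> w mod k)
    \<or> (caterpillar k v mod k = 0 \<and> caterpillar k v div k \<le> w div k)"
proof (cases "v mod k = 0")
  case True
  then obtain q where "v = q * k" by (metis mod_eq_0_iff_dvd dvd_def mult.commute)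
  moreover have "q \<le> w div k" using assms True \<open>v = q * k\<close> by auto
  moreover have "caterpillar k v = (q - 1) * k" using True \<open>v = q * k\<close> by (simp add: caterpillar_def diff_mult_distrib)
  ultimately show ?thesis using \<open>0 < k\<close> by auto
next
  case False
  define q t where "q = v div k" and "t = v mod k"
  have "caterpillar k v = q * k + (t - 1)" using False by (simp add: caterpillar_def q_def t_def)
  moreover have "t - 1 < k" using assms(1) by (simp add: t_def less_imp_diff_less)
  moreover have "q = w div k" "t \<le> w mod k" using assms(2) False by (auto simp: q_def t_def)
  ultimately show ?thesis by auto
qed

lemma is_anc_caterpillarD:
  assumes "0 < k" and "is_anc (caterpillar k) u w"
  shows "(u div k = w div k \<and> u mod k \<le> w mod k) \<or> (u mod k = 0 \<and> u div k \<le> w div k)"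
proof -
  obtain m where "(caterpillar k ^^ m) w = u" using assms(2) by (auto simp: is_anc_def)
  moreover have "(((caterpillar k ^^ m) w) div k = w div k \<and> ((caterpillar k ^^ m) w) mod k \<le> w mod k)
    \<or> (((caterpillar k ^^ m) w) mod k = 0 \<and> ((caterpillar k ^^ m) w) div k \<le> w div k)"
    by (induction m) (simp_all add: caterpillar_preserves_ancestor_region[OF assms(1)])
  ultimately show ?thesis by simp
qed

locale routed_caterpillar =
  fixes n k :: nat and dec :: "bool list \<Rightarrow> bool list \<Rightarrow> nat"
    and lab :: "nat \<Rightarrow> bool list" and port :: "nat \<Rightarrow> nat"
  assumes k_pos: "0 < k" and n_pos: "1 \<le> n"
    and ports: "valid_ports n (caterpillar k) port"
    and routes: "routes_correctly n (caterpillar k) dec lab port"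
begin

lemma dec_descendant_nonzero:
  "u < n \<Longrightarrow> w < n \<Longrightarrow> u \<noteq> w \<Longrightarrow> is_anc (caterpillar k) u w \<Longrightarrow> dec (lab u) (lab w) \<noteq> 0"
  using binary_tree_caterpillar[OF k_pos n_pos] ports routes
  by (intro routes_correctly_to_descendant) (auto simp: binary_tree_def)

lemma dec_nondescendant_zero:
  "u < n \<Longrightarrow> w < n \<Longrightarrow> u \<noteq> w \<Longrightarrow> \<not> is_anc (caterpillar k) u w \<Longrightarrow> dec (lab u) (lab w) = 0"
  using routes by (simp add: routes_correctly_def)

lemma dec_within_leg:
  assumes "u \<in> leg k i" "w \<in> leg k i" "u < w" "(i + 1) * k \<le> n"
  shows "dec (lab u) (lab w) \<noteq> 0" and "dec (lab w) (lab u) = 0"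
proof -
  have "u < n" "w < n" using assms leg_less by blast+
  have u: "u div k = i" "u mod k \<noteq> 0" and w: "w div k = i" "w mod k \<noteq> 0"
    using assms(1,2) mem_leg_iff[OF k_pos] by auto
  have u_eq: "u = i * k + u mod k" and w_eq: "w = i * k + w mod k"
    using u(1) w(1) div_mult_mod_eq[of u k] div_mult_mod_eq[of w k] by simp_all
  have "w mod k < k" using k_pos by simp
  moreover have "u mod k < w mod k" using assms(3) u_eq w_eq by linarith
  ultimately have "is_anc (caterpillar k) (i * k + w mod k - (w mod k - u mod k)) w"
    using is_anc_caterpillar_leg[of "w mod k" k "w mod k - u mod k" i] w_eq by simp
  then have "is_anc (caterpillar k) u w" using \<open>u mod k < w mod k\<close> u_eq by (simp add: diff_diff_right)
  then show "dec (lab u) (lab w) \<noteq> 0"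
    using dec_descendant_nonzero \<open>u < n\<close> \<open>w < n\<close> assms(3) by simp
  have "\<not> is_anc (caterpillar k) w u"
    using is_anc_caterpillarD[OF k_pos, of w u] u w \<open>u mod k < w mod k\<close> by auto
  then show "dec (lab w) (lab u) = 0"
    using dec_nondescendant_zero \<open>u < n\<close> \<open>w < n\<close> assms(3) by simp
qed

lemma inj_on_lab_leg:
  assumes "(i + 1) * k \<le> n" shows "inj_on lab (leg k i)"
proof (rule inj_onI, rule ccontr)
  fix u w assume "u \<in> leg k i" "w \<in> leg k i" "lab u = lab w" "u \<noteq> w"
  then show False
    using dec_within_leg[OF _ _ _ assms] by (metis linorder_neqE_nat)
qed

lemma dec_across_legs:
  assumes "a \<in> lab ` leg k i" "b \<in> lab ` leg k i'" "i \<noteq> i'"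
    and "(i + 1) * k \<le> n" "(i' + 1) * k \<le> n"
  shows "dec a b = 0"
proof -
  obtain u w where uw: "u \<in> leg k i" "w \<in> leg k i'" "a = lab u" "b = lab w"
    using assms(1,2) by blast
  then have "u div k = i" "u mod k \<noteq> 0" "w div k = i'"
    using mem_leg_iff[OF k_pos] by auto
  then have "u \<noteq> w" "\<not> is_anc (caterpillar k) u w"
    using assms(3) is_anc_caterpillarD[OF k_pos, of u w] by auto
  moreover have "u < n" "w < n" using uw(1,2) assms(4,5) leg_less by blast+
  ultimately show ?thesis using dec_nondescendant_zero uw(3,4) by simp
qed

lemma lab_across_legs_distinct:
  assumes "u \<in> leg k i" "w \<in> leg k i'" "i < i'" "(i' + 1) * k \<le> n"
  shows "lab u \<noteq> lab w"
proof
  assume "lab u = lab w"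
  \<comment> \<open>The spine node i'*k routes towards w but not towards u.\<close>
  have u: "u div k = i" "u mod k \<noteq> 0" and w: "w div k = i'" "w mod k \<noteq> 0"
    using assms(1,2) mem_leg_iff[OF k_pos] by auto
  have "i' * k < n" using assms(4) k_pos by simp
  have "(i + 1) * k \<le> (i' + 1) * k" using assms(3) by simp
  then have "u < n" "w < n" using assms leg_less by (meson le_trans)+
  have "is_anc (caterpillar k) (i' * k) (i' * k + w mod k)"
    using is_anc_caterpillar_leg[of "w mod k" k "w mod k" i'] k_pos by simp
  moreover have "i' * k + w mod k = w" using w(1) div_mult_mod_eq[of w k] by simp
  ultimately have "is_anc (caterpillar k) (i' * k) w" by simp
  moreover have "i' * k \<noteq> u" "i' * k \<noteq> w" using u(2) w(2) by auto
  ultimately have "dec (lab (i' * k)) (lab w) \<noteq> 0"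
    using dec_descendant_nonzero \<open>i' * k < n\<close> \<open>w < n\<close> by blast
  moreover have "\<not> is_anc (caterpillar k) (i' * k) u"
    using is_anc_caterpillarD[OF k_pos, of "i' * k" u] u assms(3) k_pos by auto
  then have "dec (lab (i' * k)) (lab u) = 0"
    using dec_nondescendant_zero \<open>i' * k < n\<close> \<open>u < n\<close> \<open>i' * k \<noteq> u\<close> by blast
  ultimately show False using \<open>lab u = lab w\<close> by simp
qed

lemma disjoint_lab_legs:
  assumes "i \<noteq> i'" "(i + 1) * k \<le> n" "(i' + 1) * k \<le> n"
  shows "lab ` leg k i \<inter> lab ` leg k i' = {}"
proof -
  have "lab u \<noteq> lab w" if "u \<in> leg k i" "w \<in> leg k i'" for u w
  proof (cases "i < i'")
    case True
    show ?thesis using lab_across_legs_distinct[OF that True assms(3)] .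
  next
    case False
    then have "i' < i" using assms(1) by simp
    then show ?thesis using lab_across_legs_distinct[OF that(2,1) _ assms(2)] by metis
  qed
  then show ?thesis by blast
qed

lemma dec_lab_leg_chain:
  assumes "a \<in> lab ` leg k i" "b \<in> lab ` leg k i" "a \<noteq> b" "(i + 1) * k \<le> n"
  shows "dec a b \<noteq> 0 \<or> dec b a \<noteq> 0"
proof -
  obtain u w where "u \<in> leg k i" "w \<in> leg k i" "a = lab u" "b = lab w" "u \<noteq> w"
    using assms(1-3) by blast
  then show ?thesis
    using dec_within_leg[OF _ _ _ assms(4)] by (cases "u < w") (auto simp: not_less_iff_gr_or_eq)
qed

end

section \<open>Families of chains\<close>

lemma card_chain_Int_blocks_le:
  assumes card: "\<And>i. i < m \<Longrightarrow> finite (B i) \<and> card (B i) = s"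
    and disjoint: "\<And>i i'. i < m \<Longrightarrow> i' < m \<Longrightarrow> i \<noteq> i' \<Longrightarrow> B i \<inter> B i' = {}"
    and unrelated: "\<And>i i' a b. i < m \<Longrightarrow> i' < m \<Longrightarrow> i \<noteq> i' \<Longrightarrow> a \<in> B i \<Longrightarrow> b \<in> B i' \<Longrightarrow> \<not> R a b"
    and chain: "\<And>a b. a \<in> D \<Longrightarrow> b \<in> D \<Longrightarrow> a \<noteq> b \<Longrightarrow> R a b \<or> R b a"
  shows "card (D \<inter> (\<Union>i<m. B i)) \<le> s"
proof (cases "D \<inter> (\<Union>i<m. B i) = {}")
  case False
  then obtain a i\<^sub>0 where a: "a \<in> D" "i\<^sub>0 < m" "a \<in> B i\<^sub>0" by blast
  have "D \<inter> (\<Union>i<m. B i) \<subseteq> B i\<^sub>0"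
  proof
    fix b assume "b \<in> D \<inter> (\<Union>i<m. B i)"
    then obtain i where b: "b \<in> D" "i < m" "b \<in> B i" by blast
    show "b \<in> B i\<^sub>0"
    proof (rule ccontr)
      assume "b \<notin> B i\<^sub>0"
      then have "i \<noteq> i\<^sub>0" "a \<noteq> b" using a b by auto
      then show False using chain unrelated a b by metis
    qed
  qed
  then have "card (D \<inter> (\<Union>i<m. B i)) \<le> card (B i\<^sub>0)"
    using card[OF a(2)] by (intro card_mono) auto
  then show ?thesis using card[OF a(2)] by simp
qed simp

lemma card_UN_levels_ge:
  fixes B :: "nat \<Rightarrow> nat \<Rightarrow> 'a set"
  shows "\<lbrakk>\<And>j i. j < J \<Longrightarrow> i < m j \<Longrightarrow> finite (B j i) \<and> card (B j i) = s j;
    \<And>j i i'. j < J \<Longrightarrow> i < m j \<Longrightarrow> i' < m j \<Longrightarrow> i \<noteq> i' \<Longrightarrow> B j i \<inter> B j i' = {};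
    \<And>j i a b. j < J \<Longrightarrow> i < m j \<Longrightarrow> a \<in> B j i \<Longrightarrow> b \<in> B j i \<Longrightarrow> a \<noteq> b \<Longrightarrow> R a b \<or> R b a;
    \<And>j i i' a b. j < J \<Longrightarrow> i < m j \<Longrightarrow> i' < m j \<Longrightarrow> i \<noteq> i' \<Longrightarrow> a \<in> B j i \<Longrightarrow> b \<in> B j i'
      \<Longrightarrow> \<not> R a b\<rbrakk>
    \<Longrightarrow> (\<Sum>j<J. m j * (s j - (\<Sum>j'<j. s j'))) \<le> card (\<Union>j<J. \<Union>i<m j. B j i)"
proof (induction J)
  case (Suc J)
  note card = Suc.prems(1) and disjoint = Suc.prems(2) and chain = Suc.prems(3)
    and unrelated = Suc.prems(4)
  define E where "E = (\<Union>j<J. \<Union>i<m j. B j i)"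
  have fin: "finite (B J i)" if "i < m J" for i using card that by blast
  have new: "s J - (\<Sum>j<J. s j) \<le> card (B J i - E)" if i: "i < m J" for i
  proof -
    have "card (B J i \<inter> E) \<le> (\<Sum>j<J. card (B J i \<inter> (\<Union>i'<m j. B j i')))"
      unfolding E_def Int_UN_distrib by (rule card_UN_le) simp
    also have "\<dots> \<le> (\<Sum>j<J. s j)"
    proof (rule sum_mono)
      fix j assume "j \<in> {..<J}"
      then have j: "j < Suc J" by simp
      show "card (B J i \<inter> (\<Union>i'<m j. B j i')) \<le> s j"
        by (rule card_chain_Int_blocks_le[where R = R])
          (use card[OF j] disjoint[OF j] unrelated[OF j] chain[OF lessI i] in blast)+
    qed
    finally show ?thesis
      using card_Diff_subset_Int[of "B J i" E] fin[OF i] card[of J i] i by simp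
  qed
  have "finite E" unfolding E_def using card by (auto simp: less_Suc_eq)
  moreover have "card (\<Union>i<m J. B J i - E) = (\<Sum>i<m J. card (B J i - E))"
    using fin disjoint[of J] by (intro card_UN_disjoint) auto
  ultimately have "card (E \<union> (\<Union>i<m J. B J i - E)) = card E + (\<Sum>i<m J. card (B J i - E))"
    using fin by (subst card_Un_disjoint) auto
  moreover have "(\<Union>j<Suc J. \<Union>i<m j. B j i) = E \<union> (\<Union>i<m J. B J i - E)"
    unfolding E_def lessThan_Suc by blast
  moreover have "m J * (s J - (\<Sum>j<J. s j)) \<le> (\<Sum>i<m J. card (B J i - E))"
    using sum_mono[of "{..<m J}" "\<lambda>_. s J - (\<Sum>j<J. s j)", OF new] by simp
  moreover have "(\<Sum>j<J. m j * (s j - (\<Sum>j'<j. s j'))) \<le> card E"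
    unfolding E_def by (rule Suc.IH) (rule card disjoint chain unrelated; simp)+
  ultimately show ?case by simp
qed simp

section \<open>Counting labels\<close>

lemma three_times_sum_four_powers: "3 * (\<Sum>j<J. (4::nat) ^ j) + 1 = 4 ^ J"
  by (induction J) auto

lemma legs_fill_level:
  assumes "4 ^ (j + 1) \<le> (n::nat)" shows "3 * n \<le> 8 * (n div (4 ^ j + 1)) * 4 ^ j"
proof -
  define k m where "k = (4::nat) ^ j + 1" and "m = n div k"
  have "n = m * k + n mod k" by (simp add: m_def)
  moreover have "n mod k \<le> 4 ^ j" using mod_less_divisor[of k n] by (simp add: k_def)
  moreover have "m * k \<le> 2 * m * 4 ^ j" using one_le_power[of "4::nat" j] by (simp add: k_def algebra_simps)
  ultimately have "n \<le> 2 * (m * 4 ^ j) + 4 ^ j" by linarith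
  moreover have "4 * 4 ^ j \<le> n" using assms by simp
  ultimately have "3 * n \<le> 8 * (m * 4 ^ j)" by linarith
  then show ?thesis by (simp add: m_def k_def mult.assoc)
qed

lemma new_labels_fill_level:
  assumes "4 ^ (j + 1) \<le> (n::nat)"
  shows "3 * n \<le> 12 * (n div (4 ^ j + 1) * (4 ^ j - (\<Sum>j'<j. 4 ^ j')))"
proof -
  have "3 * n \<le> 4 * (n div (4 ^ j + 1)) * (2 * 4 ^ j)"
    using legs_fill_level[OF assms] by (simp add: ac_simps)
  also have "\<dots> \<le> 4 * (n div (4 ^ j + 1)) * (3 * (4 ^ j - (\<Sum>j'<j. 4 ^ j')))"
    using three_times_sum_four_powers[of j] by (intro mult_le_mono2) linarith
  finally show ?thesis by simp
qed

lemma card_labels_ge: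
  assumes "4 ^ J \<le> n"
    and routed: "\<And>j. j < J \<Longrightarrow> routed_caterpillar n (4 ^ j + 1) dec (lab j) (port j)"
  shows "n * J \<le> 4 * card (\<Union>j<J. lab j ` {..<n})"
proof -
  define m where "m j = n div (4 ^ j + 1)" for j
  define B where "B j i = lab j ` leg (4 ^ j + 1) i" for j i
  have inside: "(i + 1) * (4 ^ j + 1) \<le> n" if "i < m j" for i j
    using that unfolding m_def by (metis Suc_eq_plus1 Suc_leI div_times_less_eq_dividend le_trans mult_le_mono1)
  have "(\<Sum>j<J. m j * (4 ^ j - (\<Sum>j'<j. 4 ^ j'))) \<le> card (\<Union>j<J. \<Union>i<m j. B j i)"
  proof (rule card_UN_levels_ge[where R = "\<lambda>a b. dec a b \<noteq> 0"])
    fix j i assume "j < J" "i < m j"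
    then show "finite (B j i) \<and> card (B j i) = 4 ^ j"
      using routed_caterpillar.inj_on_lab_leg[OF routed inside]
      by (simp add: B_def card_image leg_def)
  next
    fix j i i' assume "j < J" "i < m j" "i' < m j" "i \<noteq> i'"
    then show "B j i \<inter> B j i' = {}"
      unfolding B_def by (intro routed_caterpillar.disjoint_lab_legs[OF routed] inside)
  next
    fix j i a b assume "j < J" "i < m j" "a \<in> B j i" "b \<in> B j i" "a \<noteq> b"
    then show "dec a b \<noteq> 0 \<or> dec b a \<noteq> 0"
      unfolding B_def by (intro routed_caterpillar.dec_lab_leg_chain[OF routed] inside)
  next
    fix j i i' a b assume "j < J" "i < m j" "i' < m j" "i \<noteq> i'" "a \<in> B j i" "b \<in> B j i'"
    then show "\<not> dec a b \<noteq> 0"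
      unfolding B_def by (simp add: routed_caterpillar.dec_across_legs[OF routed _ _ _ inside inside])
  qed
  also have "\<dots> \<le> card (\<Union>j<J. lab j ` {..<n})"
  proof (rule card_mono)
    show "(\<Union>j<J. \<Union>i<m j. B j i) \<subseteq> (\<Union>j<J. lab j ` {..<n})"
      unfolding B_def using leg_less[OF _ inside] by blast
  qed simp
  finally have levels: "(\<Sum>j<J. m j * (4 ^ j - (\<Sum>j'<j. 4 ^ j'))) \<le> card (\<Union>j<J. lab j ` {..<n})" .
  have level: "3 * n \<le> 12 * (m j * (4 ^ j - (\<Sum>j'<j. 4 ^ j')))" if "j < J" for j
  proof -
    have "(4::nat) ^ (j + 1) \<le> 4 ^ J" using that by (intro power_increasing) simp_all
    then show ?thesis unfolding m_def using assms(1) by (intro new_labels_fill_level) linarith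
  qed
  have "(\<Sum>j<J. 3 * n) \<le> (\<Sum>j<J. 12 * (m j * (4 ^ j - (\<Sum>j'<j. 4 ^ j'))))"
    using level by (intro sum_mono) simp
  then have "3 * n * J \<le> 12 * (\<Sum>j<J. m j * (4 ^ j - (\<Sum>j'<j. 4 ^ j')))"
    by (simp add: sum_distrib_left mult.commute)
  with levels show ?thesis by linarith
qed

lemma card_bool_lists_length_le: "card {xs :: bool list. length xs \<le> l} < 2 ^ (l + 1)"
proof -
  have "card {xs :: bool list. set xs \<subseteq> UNIV \<and> length xs \<le> l} = (\<Sum>i\<le>l. 2 ^ i)"
    using card_lists_length_le[of "UNIV :: bool set" l] by (simp add: card_UNIV_bool)
  moreover have "(\<Sum>i\<le>l. (2::nat) ^ i) < 2 ^ (l + 1)" by (induction l) auto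
  ultimately show ?thesis by simp
qed

lemma card_bool_lists_shorter:
  fixes E :: "bool list set"
  assumes "\<And>a. a \<in> E \<Longrightarrow> real (length a) < L" and "0 \<le> L"
  shows "real (card E) < 2 * 2 powr L"
proof -
  define l where "l = nat \<lfloor>L\<rfloor>"
  have "E \<subseteq> {xs. length xs \<le> l}" using assms(1) unfolding l_def by (fastforce simp: le_nat_floor)
  moreover have "finite {xs :: bool list. length xs \<le> l}"
    using finite_lists_length_le[of "UNIV :: bool set" l] by simp
  ultimately have "card E \<le> card {xs :: bool list. length xs \<le> l}"
    by (simp add: card_mono)
  then have "card E < 2 * 2 ^ l" using card_bool_lists_length_le[of l] by simp
  then have "real (card E) < real (2 * 2 ^ l)" by (simp only: of_nat_less_iff)
  also have "\<dots> \<le> 2 * 2 powr L"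
    unfolding l_def using assms(2) by (simp add: powr_realpow[symmetric])
  finally show ?thesis by simp
qed

lemma four_power_half_log_le:
  assumes "0 < n" shows "4 ^ nat \<lfloor>log 2 (real n) / 2\<rfloor> \<le> n"
proof -
  define J where "J = nat \<lfloor>log 2 (real n) / 2\<rfloor>"
  have "real (4 ^ J) = 2 powr real (2 * J)"
    by (subst powr_realpow) (simp_all add: power_mult)
  also have "\<dots> \<le> 2 powr log 2 (real n)"
  proof (rule powr_mono)
    have "0 \<le> log 2 (real n)" using assms by simp
    then show "real (2 * J) \<le> log 2 (real n)"
      unfolding J_def using of_int_floor_le[of "log 2 (real n) / 2"] by simp
  qed simp
  also have "\<dots> = real n" using assms by simp
  finally show ?thesis unfolding J_def by linarith
qed

lemma binary_routing_label_length_bound: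
  fixes dec :: "bool list \<Rightarrow> bool list \<Rightarrow> nat"
  assumes "1 \<le> n" "0 \<le> L"
    and scheme: "\<And>p. binary_tree n p \<Longrightarrow> \<exists>lab port. valid_ports n p port
      \<and> routes_correctly n p dec lab port \<and> (\<forall>u<n. real (length (lab u)) < L)"
  shows "real n * real (nat \<lfloor>log 2 (real n) / 2\<rfloor>) < 8 * 2 powr L"
proof -
  define J where "J = nat \<lfloor>log 2 (real n) / 2\<rfloor>"
  have "\<forall>j. \<exists>lab port. valid_ports n (caterpillar (4 ^ j + 1)) port
      \<and> routes_correctly n (caterpillar (4 ^ j + 1)) dec lab port \<and> (\<forall>u<n. real (length (lab u)) < L)"
    using scheme binary_tree_caterpillar \<open>1 \<le> n\<close> by simp
  then obtain lab port where labelling: "\<And>j. valid_ports n (caterpillar (4 ^ j + 1)) (port j)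
      \<and> routes_correctly n (caterpillar (4 ^ j + 1)) dec (lab j) (port j) \<and> (\<forall>u<n. real (length (lab j u)) < L)"
    by metis
  define E where "E = (\<Union>j<J. lab j ` {..<n})"
  have "routed_caterpillar n (4 ^ j + 1) dec (lab j) (port j)" for j
    using labelling[of j] \<open>1 \<le> n\<close> by (simp add: routed_caterpillar_def)
  then have "n * J \<le> 4 * card E"
    unfolding E_def J_def using four_power_half_log_le \<open>1 \<le> n\<close> by (intro card_labels_ge) simp_all
  then have "real n * real J \<le> 4 * real (card E)"
    by (metis of_nat_le_iff of_nat_mult of_nat_numeral)
  also have "\<dots> < 8 * 2 powr L"
    using card_bool_lists_shorter[of E L] labelling \<open>0 \<le> L\<close> by (fastforce simp: E_def)
  finally show ?thesis unfolding J_def .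
qed

lemma powr_log_plus_half_loglog:
  assumes "1 < y" shows "2 powr (log 2 y + 1/2 * log 2 (log 2 y)) = y * sqrt (log 2 y)"
proof -
  have "0 < log 2 y" using assms by simp
  have "2 powr (1/2 * log 2 (log 2 y)) = (2 powr log 2 (log 2 y)) powr (1/2)"
    by (simp add: powr_powr mult.commute)
  also have "\<dots> = sqrt (log 2 y)" using \<open>0 < log 2 y\<close> by (simp add: powr_half_sqrt)
  finally show ?thesis using assms by (simp add: powr_add)
qed

lemma sixteen_sqrt_plus_two_le:
  fixes x :: real assumes "400 \<le> x" shows "16 * sqrt x + 2 \<le> x"
proof -
  have "20 \<le> sqrt x" using real_sqrt_le_mono[OF assms] by simp
  then have "20 * sqrt x \<le> sqrt x * sqrt x" by (intro mult_right_mono) linarith+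
  also have "\<dots> = x" using assms by simp
  finally show ?thesis using \<open>20 \<le> sqrt x\<close> by linarith
qed

theorem mainTheorem9:
  "\<exists>c::real. c > 0 \<and> (\<exists>N::nat. \<forall>n\<ge>N.
     \<not> (\<exists>dec :: bool list \<Rightarrow> bool list \<Rightarrow> nat.
          \<forall>p. binary_tree n p \<longrightarrow>
            (\<exists>lab port. valid_ports n p port \<and> routes_correctly n p dec lab port \<and>
               (\<forall>u<n. real (length (lab u)) < log 2 (real n) + c * log 2 (log 2 (real n))))))"
proof (intro exI conjI allI impI notI)
  show "(1/2::real) > 0" by simp
  fix n :: nat
  assume "2 ^ 400 \<le> n"
  define x where "x = log 2 (real n)"
  have "1 < n" using \<open>2 ^ 400 \<le> n\<close> less_le_trans[of 1 "2 ^ 400" n] by simp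
  have "400 \<le> x"
  proof -
    have "(2::real) powr 400 \<le> real n" using \<open>2 ^ 400 \<le> n\<close> by (simp add: powr_numeral)
    then have "log 2 (2 powr 400) \<le> x" unfolding x_def by (subst log_le_cancel_iff) auto
    then show ?thesis by (subst (asm) log_powr_cancel) auto
  qed
  assume "\<exists>dec :: bool list \<Rightarrow> bool list \<Rightarrow> nat. \<forall>p. binary_tree n p \<longrightarrow>
    (\<exists>lab port. valid_ports n p port \<and> routes_correctly n p dec lab port \<and>
      (\<forall>u<n. real (length (lab u)) < log 2 (real n) + 1/2 * log 2 (log 2 (real n))))"
  then obtain dec :: "bool list \<Rightarrow> bool list \<Rightarrow> nat" where "\<forall>p. binary_tree n p \<longrightarrow>
    (\<exists>lab port. valid_ports n p port \<and> routes_correctly n p dec lab port \<and>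
      (\<forall>u<n. real (length (lab u)) < x + 1/2 * log 2 x))"
    unfolding x_def by blast
  then have "real n * real (nat \<lfloor>x / 2\<rfloor>) < 8 * 2 powr (x + 1/2 * log 2 x)"
    using \<open>1 < n\<close> \<open>400 \<le> x\<close> unfolding x_def by (intro binary_routing_label_length_bound[where dec = dec]) simp_all
  also have "2 powr (x + 1/2 * log 2 x) = real n * sqrt x"
    unfolding x_def using \<open>1 < n\<close> by (intro powr_log_plus_half_loglog) simp
  finally have "real (nat \<lfloor>x / 2\<rfloor>) < 8 * sqrt x" using \<open>1 < n\<close> by simp
  then show False using sixteen_sqrt_plus_two_le[OF \<open>400 \<le> x\<close>] by linarith
qed

end
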